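(* Let $k \ge 1$, $m \ge 1$, and let $b(n) = \left\lfloor \frac{(n+1)^2}{8}\right\rfloor$ for $n \ge 0$. The number of odd Grassmannian involutions of $[m]$ that avoid $\operatorname{id}_k = 12\cdots k$ equals $b(m)$ if $m \le k$; equals $b(2k-m)$ if $k < m < 2k$ and $m-k$ is even; equals $b(2k-m-2)$ if $k < m < 2k$ and $m-k$ is odd; and equals $0$ if $m \ge 2k$.
   Context: A permutation is Grassmannian if it has at most one descent; a Grassmannian involution is a Grassmannian permutation $\pi$ with $\pi^{-1}=\pi$; it is odd if it has an odd number of inversions. A permutation avoids $12\cdots k$ if it has no increasing subsequence of length $k$. *)

theory Defs
  imports "HOL-Combinatorics.Permutations"
begin

text \<open>Permutations of [m] = {1..m} are functions \<pi> with \<pi> permutes {1..m}.\<close>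

definition descents :: "(nat \<Rightarrow> nat) \<Rightarrow> nat \<Rightarrow> nat set" where
  "descents \<pi> m = {i. 1 \<le> i \<and> i < m \<and> \<pi> i > \<pi> (Suc i)}"

definition grassmannian :: "(nat \<Rightarrow> nat) \<Rightarrow> nat \<Rightarrow> bool" where
  "grassmannian \<pi> m \<longleftrightarrow> card (descents \<pi> m) \<le> 1"

definition inversions :: "(nat \<Rightarrow> nat) \<Rightarrow> nat \<Rightarrow> (nat \<times> nat) set" where
  "inversions \<pi> m = {(i, j). 1 \<le> i \<and> i < j \<and> j \<le> m \<and> \<pi> i > \<pi> j}"

definition is_involution :: "(nat \<Rightarrow> nat) \<Rightarrow> bool" where
  "is_involution \<pi> \<longleftrightarrow> inv \<pi> = \<pi>"

definition contains_increasing :: "(nat \<Rightarrow> nat) \<Rightarrow> nat \<Rightarrow> nat \<Rightarrow> bool" where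
  "contains_increasing \<pi> m k \<longleftrightarrow>
     (\<exists>idx :: nat \<Rightarrow> nat. strict_mono_on {..<k} idx \<and> (\<forall>t<k. 1 \<le> idx t \<and> idx t \<le> m)
        \<and> strict_mono_on {..<k} (\<pi> \<circ> idx))"

definition avoids_increasing :: "(nat \<Rightarrow> nat) \<Rightarrow> nat \<Rightarrow> nat \<Rightarrow> bool" where
  "avoids_increasing \<pi> m k \<longleftrightarrow> \<not> contains_increasing \<pi> m k"

definition odd_grass_inv_avoiding :: "nat \<Rightarrow> nat \<Rightarrow> (nat \<Rightarrow> nat) set" where
  "odd_grass_inv_avoiding m k = {\<pi>. \<pi> permutes {1..m} \<and> grassmannian \<pi> m \<and> is_involution \<pi>
      \<and> odd (card (inversions \<pi> m)) \<and> avoids_increasing \<pi> m k}"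

definition bseq :: "nat \<Rightarrow> nat" where
  "bseq n = (n + 1)^2 div 8"

end

theory Submission
  imports Defs
begin

text \<open>A Grassmannian involution of [m] is increasing on [1, d] and on (d, m], where d is its descent;
  being an involution, it must then exchange a block (a, a + c] with the adjacent block
  (a + c, a + 2c] and fix everything else. Its inversions are the c^2 pairs across the two blocks, and
  its longest increasing subsequence omits exactly one of the blocks, so it has length m - c. Hence
  the odd involutions avoiding 12\<cdots>k correspond to pairs (a, c) with c odd, a + 2c \<le> m and
  c > m - k. Subtracting from c the least even number s \<ge> m - k turns these into the pairs with c odd
  and a + 2c \<le> m - 2s, and the number of such pairs for a bound n satisfies b(n + 4) = b(n) + n + 3.\<close>

lemma strict_mono_on_atLeastAtMost_if_Suc:
  fixes f :: "nat \<Rightarrow> 'a::order"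
  assumes step: "\<And>i. p \<le> i \<Longrightarrow> i < q \<Longrightarrow> f i < f (Suc i)"
  shows "strict_mono_on {p..q} f"
proof (rule strict_mono_onI)
  fix r s :: nat
  assume "r \<in> {p..q}" "s \<in> {p..q}" "r < s"
  then show "f r < f s"
  proof (induction s)
    case (Suc s)
    have "f s < f (Suc s)"
      using Suc.prems by (intro step) auto
    moreover have "f r < f s" if "r \<noteq> s"
      using Suc that by simp
    ultimately show ?case
      using less_trans by blast
  qed simp
qed

lemma strict_mono_on_add_diff_le:
  fixes f :: "nat \<Rightarrow> nat"
  assumes mono: "strict_mono_on {p..q} f" and "p \<le> i" "i \<le> j" "j \<le> q"
  shows "f i + (j - i) \<le> f j"
  using \<open>i \<le> j\<close> \<open>j \<le> q\<close>
proof (induction j)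
  case (Suc j)
  show ?case
  proof (cases "i = Suc j")
    case False
    then have "f i + (j - i) \<le> f j" "f j < f (Suc j)"
      using Suc \<open>p \<le> i\<close> strict_mono_onD[OF mono, of j "Suc j"] by auto
    then show ?thesis
      using False Suc.prems by linarith
  qed simp
qed simp

lemma strict_mono_on_interval_into_interval_shift:
  fixes f :: "nat \<Rightarrow> nat"
  assumes mono: "strict_mono_on {a<..a + c} f" and into: "f ` {a<..a + c} \<subseteq> {b<..b + c}"
    and i: "i \<in> {a<..a + c}"
  shows "f i + a = i + b"
proof -
  have mono': "strict_mono_on {Suc a..a + c} f"
    using mono by (simp add: greaterThanAtMost_eq_atLeastAtMost_diff atLeastSucAtMost_greaterThanAtMost)
  have "f (Suc a) + (i - Suc a) \<le> f i" "f i + (a + c - i) \<le> f (a + c)"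
    by (rule strict_mono_on_add_diff_le[OF mono']; use i in auto)+
  moreover have "f (Suc a) \<in> {b<..b + c}" "f (a + c) \<in> {b<..b + c}"
    using i into by (auto simp: image_subset_iff)
  ultimately show ?thesis
    using i by auto
qed

lemma down_closed_eq_greaterThanAtMost:
  fixes S :: "nat set"
  assumes sub: "S \<subseteq> {p<..q}" and closed: "\<And>i j. j \<in> S \<Longrightarrow> p < i \<Longrightarrow> i \<le> j \<Longrightarrow> i \<in> S"
  shows "S = {p<..p + card S}"
proof (cases "S = {}")
  case False
  have "finite S"
    using sub finite_subset by blast
  define M where "M = Max S"
  have max: "M \<in> S" "\<And>j. j \<in> S \<Longrightarrow> j \<le> M"
    using \<open>finite S\<close> False by (auto simp: M_def)
  have "S = {p<..M}"
  proof
    show "S \<subseteq> {p<..M}"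
      using sub max(2) by auto
    show "{p<..M} \<subseteq> S"
      using closed[OF max(1)] by auto
  qed
  moreover have "p < M"
    using sub max(1) by auto
  ultimately show ?thesis
    by simp
qed simp

lemma up_closed_eq_greaterThanAtMost:
  fixes S :: "nat set"
  assumes sub: "S \<subseteq> {p<..q}" and closed: "\<And>i j. i \<in> S \<Longrightarrow> i \<le> j \<Longrightarrow> j \<le> q \<Longrightarrow> j \<in> S"
  shows "S = {q - card S<..q}"
proof (cases "S = {}")
  case False
  have "finite S"
    using sub finite_subset by blast
  define M where "M = Min S"
  have min: "M \<in> S" "\<And>j. j \<in> S \<Longrightarrow> M \<le> j"
    using \<open>finite S\<close> False by (auto simp: M_def)
  have bounds: "0 < M" "M \<le> q"
    using sub min(1) by auto
  have "S = {M - 1<..q}"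
  proof
    show "S \<subseteq> {M - 1<..q}"
      using sub min(2) bounds by fastforce
    show "{M - 1<..q} \<subseteq> S"
      using closed[OF min(1)] bounds by auto
  qed
  then show ?thesis
    using bounds by simp
qed simp

text \<open>For a + 2c \<le> m, the permutation of [m] with one-line notation
  1 \<dots> a, a+c+1 \<dots> a+2c, a+1 \<dots> a+c, a+2c+1 \<dots> m.\<close>
definition block_swap :: "nat \<Rightarrow> nat \<Rightarrow> nat \<Rightarrow> nat" where
  "block_swap a c i =
     (if a < i \<and> i \<le> a + c then i + c else if a + c < i \<and> i \<le> a + 2 * c then i - c else i)"

lemma block_swap_lower_block: "a < i \<Longrightarrow> i \<le> a + c \<Longrightarrow> block_swap a c i = i + c"
  by (simp add: block_swap_def)

lemma block_swap_upper_block: "a + c < i \<Longrightarrow> i \<le> a + 2 * c \<Longrightarrow> block_swap a c i = i - c"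
  by (simp add: block_swap_def)

lemma block_swap_outside: "i \<le> a \<or> a + 2 * c < i \<Longrightarrow> block_swap a c i = i"
  by (auto simp: block_swap_def)

lemma block_swap_block_swap [simp]: "block_swap a c (block_swap a c i) = i"
  by (auto simp: block_swap_def)

lemma block_swap_permutes:
  assumes "a + 2 * c \<le> m"
  shows "block_swap a c permutes {1..m}"
proof (rule bij_imp_permutes)
  show "bij_betw (block_swap a c) {1..m} {1..m}"
    by (rule bij_betw_byWitness[where f' = "block_swap a c"]) (use assms in \<open>auto simp: block_swap_def\<close>)
  show "block_swap a c i = i" if "i \<notin> {1..m}" for i
    using that assms by (auto simp: block_swap_def)
qed

lemma is_involution_block_swap: "is_involution (block_swap a c)"
  unfolding is_involution_def by (rule inv_unique_comp) (auto simp: fun_eq_iff)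

lemma grassmannian_block_swap: "grassmannian (block_swap a c) m"
proof -
  have "descents (block_swap a c) m \<subseteq> {a + c}"
    by (auto simp: descents_def block_swap_def split: if_splits)
  then have "card (descents (block_swap a c) m) \<le> card {a + c}"
    by (rule card_mono[rotated]) simp
  then show ?thesis
    by (simp add: grassmannian_def)
qed

lemma inversions_block_swap:
  assumes "a + 2 * c \<le> m"
  shows "inversions (block_swap a c) m = {a<..a + c} \<times> {a + c<..a + 2 * c}"
  using assms by (auto simp: inversions_def block_swap_def split: if_splits)

lemma odd_card_inversions_block_swap_iff:
  assumes "a + 2 * c \<le> m"
  shows "odd (card (inversions (block_swap a c) m)) \<longleftrightarrow> odd c"
  by (simp add: inversions_block_swap[OF assms] card_cartesian_product)

lemma increasing_subsequence_misses_a_block: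
  fixes k :: nat
  assumes idx: "strict_mono_on {..<k} idx" and val: "strict_mono_on {..<k} (block_swap a c \<circ> idx)"
  shows "idx ` {..<k} \<inter> {a<..a + c} = {} \<or> idx ` {..<k} \<inter> {a + c<..a + 2 * c} = {}"
proof (rule ccontr)
  assume "\<not> ?thesis"
  then obtain s t where st: "s < k" "t < k" "idx s \<in> {a<..a + c}" "idx t \<in> {a + c<..a + 2 * c}"
    by blast
  then have "s < t"
    using strict_mono_onD[OF idx, of t s] by (cases s t rule: linorder_cases) auto
  then have "block_swap a c (idx s) < block_swap a c (idx t)"
    using strict_mono_onD[OF val] st by auto
  with st show False by (auto simp: block_swap_def)
qed

lemma contains_increasing_block_swap_iff:
  assumes "a + 2 * c \<le> m"
  shows "contains_increasing (block_swap a c) m k \<longleftrightarrow> k + c \<le> m"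
proof
  assume "contains_increasing (block_swap a c) m k"
  then obtain idx where idx: "strict_mono_on {..<k} idx" and range: "idx ` {..<k} \<subseteq> {1..m}"
    and val: "strict_mono_on {..<k} (block_swap a c \<circ> idx)"
    unfolding contains_increasing_def by (auto simp: image_subset_iff)
  have bound: "k + c \<le> m" if "idx ` {..<k} \<subseteq> {1..m} - B" "B \<subseteq> {1..m}" "card B = c" for B
  proof -
    have "card (idx ` {..<k}) \<le> card ({1..m} - B)"
      using that(1) by (rule card_mono[rotated]) simp
    moreover have "card (idx ` {..<k}) = k"
      using card_image[OF strict_mono_on_imp_inj_on[OF idx]] by simp
    moreover have "card ({1..m} - B) = m - c"
      using that(2,3) by (simp add: card_Diff_subset finite_subset)
    ultimately show ?thesis
      using that(2,3) card_mono[OF _ that(2)] by simp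
  qed
  have "idx ` {..<k} \<subseteq> {1..m} - {a<..a + c} \<or> idx ` {..<k} \<subseteq> {1..m} - {a + c<..a + 2 * c}"
    using increasing_subsequence_misses_a_block[OF idx val] range by blast
  moreover have blocks: "{a<..a + c} \<subseteq> {1..m}" "{a + c<..a + 2 * c} \<subseteq> {1..m}"
    using assms by auto
  ultimately show "k + c \<le> m"
    using bound[OF _ blocks(1)] bound[OF _ blocks(2)] by auto
next
  assume "k + c \<le> m"
  define idx where "idx t = (if t < a then t + 1 else t + 1 + c)" for t
  have "strict_mono_on {..<k} idx"
    by (rule strict_mono_onI) (simp add: idx_def)
  moreover have "strict_mono_on {..<k} (block_swap a c \<circ> idx)"
    by (rule strict_mono_onI) (simp add: idx_def block_swap_def)
  moreover have "1 \<le> idx t \<and> idx t \<le> m" if "t < k" for t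
    using that \<open>k + c \<le> m\<close> by (simp add: idx_def)
  ultimately show "contains_increasing (block_swap a c) m k"
    unfolding contains_increasing_def by blast
qed

lemma grassmannian_strict_mono_on_blocks:
  assumes perm: "\<pi> permutes {1..m}" and grass: "grassmannian \<pi> m"
  obtains d where "d \<le> m" "strict_mono_on {1..d} \<pi>" "strict_mono_on {d<..m} \<pi>"
proof -
  have step: "\<pi> i < \<pi> (Suc i)" if "1 \<le> i" "i < m" "i \<notin> descents \<pi> m" for i
  proof -
    have "\<pi> i \<noteq> \<pi> (Suc i)"
      using permutes_inj[OF perm] by (metis injD n_not_Suc_n)
    then show ?thesis
      using that by (auto simp: descents_def)
  qed
  have "finite (descents \<pi> m)"
    by (rule finite_subset[of _ "{..<m}"]) (auto simp: descents_def)
  with grass consider "descents \<pi> m = {}" | d where "descents \<pi> m = {d}"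
    unfolding grassmannian_def by (metis card_0_eq card_1_singletonE le_Suc_eq le_zero_eq One_nat_def)
  then show ?thesis
  proof cases
    case 1
    show ?thesis
    proof (rule that[of m])
      show "strict_mono_on {1..m} \<pi>"
        using 1 by (intro strict_mono_on_atLeastAtMost_if_Suc step) auto
    qed auto
  next
    case (2 d)
    then have d: "1 \<le> d" "d < m"
      by (auto simp: descents_def)
    show ?thesis
    proof (rule that[of d])
      show "strict_mono_on {1..d} \<pi>"
        using 2 d by (intro strict_mono_on_atLeastAtMost_if_Suc step) auto
      have "strict_mono_on {Suc d..m} \<pi>"
        using 2 d by (intro strict_mono_on_atLeastAtMost_if_Suc step) auto
      then show "strict_mono_on {d<..m} \<pi>"
        by (simp add: atLeastSucAtMost_greaterThanAtMost)
    qed (use d in simp)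
  qed
qed

text \<open>An involution increasing on [1, d] and on (d, m] moves the points of [1, d] up and those of
  (d, m] down; the points it does move form the block (d - c, d] and its image (d, d + c].\<close>
locale involution_increasing_on_blocks =
  fixes \<pi> :: "nat \<Rightarrow> nat" and m d :: nat
  assumes permutes: "\<pi> permutes {1..m}" and involutive: "\<And>i. \<pi> (\<pi> i) = i" and d_le: "d \<le> m"
    and mono_lower: "strict_mono_on {1..d} \<pi>" and mono_upper: "strict_mono_on {d<..m} \<pi>"
begin

definition raised :: "nat set" where
  "raised = {i \<in> {1..d}. d < \<pi> i}"

definition lowered :: "nat set" where
  "lowered = {j \<in> {d<..m}. \<pi> j \<le> d}"

definition width :: nat where
  "width = card raised"

lemma in_range: "i \<in> {1..m} \<Longrightarrow> \<pi> i \<in> {1..m}"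
  by (simp only: permutes_in_image[OF permutes])

lemma fixed_lower:
  assumes "1 \<le> i" "i \<le> d" "\<pi> i \<le> d"
  shows "\<pi> i = i"
proof -
  have up: "i \<le> \<pi> i" if "1 \<le> i" "i \<le> d" for i
    using strict_mono_on_add_diff_le[OF mono_lower, of 1 i] in_range[of 1] that d_le by auto
  have "\<pi> i \<le> \<pi> (\<pi> i)"
    using up[of "\<pi> i"] up[of i] assms by simp
  then show ?thesis
    using up[of i] involutive[of i] assms by simp
qed

lemma fixed_upper:
  assumes "d < j" "j \<le> m" "d < \<pi> j"
  shows "\<pi> j = j"
proof -
  have mono: "strict_mono_on {Suc d..m} \<pi>"
    using mono_upper by (simp add: atLeastSucAtMost_greaterThanAtMost)
  have down: "\<pi> j \<le> j" if "d < j" "j \<le> m" for j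
    using strict_mono_on_add_diff_le[OF mono, of j m] in_range[of m] that by auto
  have "\<pi> (\<pi> j) \<le> \<pi> j"
    using down[of "\<pi> j"] down[of j] assms by simp
  then show ?thesis
    using down[of j] involutive[of j] assms by simp
qed

lemma lowered_eq_image: "lowered = \<pi> ` raised"
proof
  show "\<pi> ` raised \<subseteq> lowered"
    using in_range involutive d_le by (auto simp: raised_def lowered_def)
  show "lowered \<subseteq> \<pi> ` raised"
  proof
    fix j assume "j \<in> lowered"
    then have "\<pi> j \<in> raised"
      using in_range[of j] involutive[of j] by (auto simp: raised_def lowered_def)
    then show "j \<in> \<pi> ` raised"
      using involutive[of j] by (metis image_eqI)
  qed
qed

lemma raised_eq: "raised = {d - width<..d}"
  unfolding width_def
proof (rule up_closed_eq_greaterThanAtMost)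
  show "raised \<subseteq> {0<..d}"
    by (auto simp: raised_def)
  show "j \<in> raised" if "i \<in> raised" "i \<le> j" "j \<le> d" for i j
    using that mono_onD[OF strict_mono_on_imp_mono_on[OF mono_lower], of i j]
    by (auto simp: raised_def)
qed

lemma lowered_eq: "lowered = {d<..d + width}"
proof -
  have "card lowered = width"
    unfolding lowered_eq_image width_def using permutes_inj[OF permutes]
    by (simp add: card_image inj_on_subset)
  moreover have "lowered = {d<..d + card lowered}"
  proof (rule down_closed_eq_greaterThanAtMost)
    show "lowered \<subseteq> {d<..m}"
      by (auto simp: lowered_def)
    show "i \<in> lowered" if "j \<in> lowered" "d < i" "i \<le> j" for i j
      using that mono_onD[OF strict_mono_on_imp_mono_on[OF mono_upper], of i j]
      by (auto simp: lowered_def)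
  qed
  ultimately show ?thesis
    by simp
qed

lemma width_le: "width \<le> d"
proof -
  have "width \<le> card {1..d}"
    unfolding width_def raised_def by (rule card_mono) auto
  then show ?thesis
    by simp
qed

lemma add_width_le: "d + width \<le> m"
proof (cases "width = 0")
  case False
  then have "d + width \<in> lowered"
    using lowered_eq by simp
  then show ?thesis
    by (simp add: lowered_def)
qed (use d_le in simp)

lemma raised_shift:
  assumes "i \<in> {d - width<..d}"
  shows "\<pi> i = i + width"
proof -
  have "\<pi> i + (d - width) = i + d"
  proof (rule strict_mono_on_interval_into_interval_shift)
    show "strict_mono_on {d - width<..d - width + width} \<pi>"
      by (rule monotone_on_subset[OF mono_lower]) (use width_le in auto)
    have "\<pi> ` {d - width<..d} = {d<..d + width}"
      unfolding raised_eq[symmetric] lowered_eq_image[symmetric] by (rule lowered_eq)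
    then show "\<pi> ` {d - width<..d - width + width} \<subseteq> {d<..d + width}"
      using width_le by simp
  qed (use assms width_le in simp)
  then show ?thesis
    using width_le by presburger
qed

lemma lowered_shift:
  assumes "i \<in> {d<..d + width}"
  shows "\<pi> i = i - width"
proof -
  have "i \<in> \<pi> ` raised"
    unfolding lowered_eq_image[symmetric] lowered_eq by (fact assms)
  then obtain h where h: "h \<in> {d - width<..d}" "i = \<pi> h"
    unfolding raised_eq by blast
  then show ?thesis
    using raised_shift[OF h(1)] involutive[of h] by simp
qed

lemma fixed_off_blocks:
  assumes "i \<notin> {d - width<..d + width}"
  shows "\<pi> i = i"
proof (cases "i \<in> {1..m}")
  case True
  show ?thesis
  proof (cases "i \<le> d")
    case True
    then have "i \<notin> raised"
      using assms raised_eq by auto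
    with \<open>i \<in> {1..m}\<close> True show ?thesis
      by (intro fixed_lower) (auto simp: raised_def)
  next
    case False
    then have "i \<notin> lowered"
      using assms lowered_eq by auto
    with \<open>i \<in> {1..m}\<close> False show ?thesis
      by (intro fixed_upper) (auto simp: lowered_def)
  qed
qed (use permutes in \<open>simp add: permutes_not_in\<close>)

lemma eq_block_swap: "\<pi> = block_swap (d - width) width"
proof
  fix i
  have ends: "d - width + width = d" "d - width + 2 * width = d + width"
    using width_le by simp_all
  consider "i \<in> {d - width<..d}" | "i \<in> {d<..d + width}" | "i \<notin> {d - width<..d + width}"
    by fastforce
  then show "\<pi> i = block_swap (d - width) width i"
  proof cases
    case 1
    then show ?thesis
      using raised_shift ends by (simp add: block_swap_lower_block)
  next
    case 2
    then show ?thesis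
      using lowered_shift ends by (simp add: block_swap_upper_block)
  next
    case 3
    then show ?thesis
      using fixed_off_blocks ends by (auto simp: block_swap_outside)
  qed
qed
end

lemma grassmannian_involution_eq_block_swap:
  assumes perm: "\<pi> permutes {1..m}" and "grassmannian \<pi> m" and "is_involution \<pi>"
  obtains a c where "a + 2 * c \<le> m" "\<pi> = block_swap a c"
proof -
  obtain d where "d \<le> m" "strict_mono_on {1..d} \<pi>" "strict_mono_on {d<..m} \<pi>"
    using grassmannian_strict_mono_on_blocks[OF perm \<open>grassmannian \<pi> m\<close>] .
  moreover have "\<pi> (\<pi> i) = i" for i
    using permutes_inverses(1)[OF perm, of i] \<open>is_involution \<pi>\<close> by (simp add: is_involution_def)
  ultimately interpret involution_increasing_on_blocks \<pi> m d
    using perm by unfold_locales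
  show ?thesis
    using that[of "d - width" width] eq_block_swap width_le add_width_le by simp
qed

lemma inj_on_block_swap: "inj_on (\<lambda>(a, c). block_swap a c) {(a, c). 0 < c}"
proof (rule inj_onI, clarsimp)
  fix a c a' c' :: nat
  assume "0 < c" "0 < c'" and eq: "block_swap a c = block_swap a' c'"
  have "a = a'"
  proof (rule ccontr)
    assume "a \<noteq> a'"
    then show False
      using fun_cong[OF eq, of "Suc (min a a')"] \<open>0 < c\<close> \<open>0 < c'\<close>
      by (auto simp: block_swap_def min_def split: if_splits)
  qed
  moreover have "c = c'"
    using fun_cong[OF eq, of "Suc a"] \<open>0 < c\<close> \<open>0 < c'\<close> \<open>a = a'\<close> by (simp add: block_swap_def)
  ultimately show "a = a' \<and> c = c'" ..
qed

text \<open>(a, c) \<in> odd_block_swaps n parametrises the odd Grassmannian involution block_swap a c of [n].\<close>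
definition odd_block_swaps :: "nat \<Rightarrow> (nat \<times> nat) set" where
  "odd_block_swaps n = {(a, c). odd c \<and> a + 2 * c \<le> n}"

definition avoiding_odd_block_swaps :: "nat \<Rightarrow> nat \<Rightarrow> (nat \<times> nat) set" where
  "avoiding_odd_block_swaps m k = {(a, c) \<in> odd_block_swaps m. m < k + c}"

lemma odd_grass_inv_avoiding_eq_image:
  "odd_grass_inv_avoiding m k = (\<lambda>(a, c). block_swap a c) ` avoiding_odd_block_swaps m k"
proof
  show "odd_grass_inv_avoiding m k \<subseteq> (\<lambda>(a, c). block_swap a c) ` avoiding_odd_block_swaps m k"
  proof
    fix \<pi> assume "\<pi> \<in> odd_grass_inv_avoiding m k"
    then have \<pi>: "\<pi> permutes {1..m}" "grassmannian \<pi> m" "is_involution \<pi>"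
      "odd (card (inversions \<pi> m))" "avoids_increasing \<pi> m k"
      by (auto simp: odd_grass_inv_avoiding_def)
    obtain a c where ac: "a + 2 * c \<le> m" "\<pi> = block_swap a c"
      using grassmannian_involution_eq_block_swap[OF \<pi>(1-3)] .
    then have "(a, c) \<in> avoiding_odd_block_swaps m k"
      using \<pi>(4,5) odd_card_inversions_block_swap_iff[OF ac(1)] contains_increasing_block_swap_iff[OF ac(1)]
      by (auto simp: avoiding_odd_block_swaps_def odd_block_swaps_def avoids_increasing_def)
    then show "\<pi> \<in> (\<lambda>(a, c). block_swap a c) ` avoiding_odd_block_swaps m k"
      using ac(2) by force
  qed
  show "(\<lambda>(a, c). block_swap a c) ` avoiding_odd_block_swaps m k \<subseteq> odd_grass_inv_avoiding m k"
  proof clarify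
    fix a c assume "(a, c) \<in> avoiding_odd_block_swaps m k"
    then have ac: "odd c" "a + 2 * c \<le> m" "m < k + c"
      by (auto simp: avoiding_odd_block_swaps_def odd_block_swaps_def)
    then show "block_swap a c \<in> odd_grass_inv_avoiding m k"
      using block_swap_permutes[OF ac(2)] grassmannian_block_swap is_involution_block_swap
        odd_card_inversions_block_swap_iff[OF ac(2)] contains_increasing_block_swap_iff[OF ac(2)]
      by (auto simp: odd_grass_inv_avoiding_def avoids_increasing_def)
  qed
qed

lemma card_image_add_snd: "card ((\<lambda>(a, c). (a, c + s)) ` A) = card (A :: ('a \<times> nat) set)"
  by (rule card_image) (auto simp: inj_on_def)

lemma finite_odd_block_swaps: "finite (odd_block_swaps n)"
  by (rule finite_subset[of _ "{..n} \<times> {..n}"]) (auto simp: odd_block_swaps_def)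

lemma odd_block_swaps_add_4:
  "odd_block_swaps (n + 4) = (\<lambda>a. (a, 1)) ` {..n + 2} \<union> (\<lambda>(a, c). (a, c + 2)) ` odd_block_swaps n"
proof
  show "odd_block_swaps (n + 4) \<subseteq> (\<lambda>a. (a, 1)) ` {..n + 2} \<union> (\<lambda>(a, c). (a, c + 2)) ` odd_block_swaps n"
  proof clarify
    fix a c
    assume ac: "(a, c) \<in> odd_block_swaps (n + 4)"
      and not_shifted: "(a, c) \<notin> (\<lambda>(a, c). (a, c + 2)) ` odd_block_swaps n"
    have "c = 1"
    proof (rule ccontr)
      assume "c \<noteq> 1"
      then have "(a, c - 2) \<in> odd_block_swaps n" "c = c - 2 + 2"
        using ac by (auto simp: odd_block_swaps_def elim!: oddE)
      then show False
        using not_shifted by (metis (no_types, lifting) case_prod_conv image_eqI)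
    qed
    then show "(a, c) \<in> (\<lambda>a. (a, 1)) ` {..n + 2}"
      using ac by (auto simp: odd_block_swaps_def)
  qed
  show "(\<lambda>a. (a, 1)) ` {..n + 2} \<union> (\<lambda>(a, c). (a, c + 2)) ` odd_block_swaps n \<subseteq> odd_block_swaps (n + 4)"
    by (auto simp: odd_block_swaps_def)
qed

lemma odd_block_swaps_less_4: "n < 4 \<Longrightarrow> odd_block_swaps n = (\<lambda>a. (a, 1)) ` {..<n - 1}"
  by (auto simp: odd_block_swaps_def image_iff elim!: oddE)

lemma bseq_add_4: "bseq (n + 4) = bseq n + (n + 3)"
proof -
  have "(n + 4 + 1)\<^sup>2 = (n + 1)\<^sup>2 + (n + 3) * 8"
    by (simp add: power2_eq_square algebra_simps)
  then show ?thesis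
    unfolding bseq_def by simp
qed

lemma card_odd_block_swaps: "card (odd_block_swaps n) = bseq n"
proof (induction n rule: less_induct)
  case (less n)
  show ?case
  proof (cases "n < 4")
    case True
    then have "n = 0 \<or> n = 1 \<or> n = 2 \<or> n = 3"
      by auto
    with True show ?thesis
      by (auto simp: odd_block_swaps_less_4 card_image inj_on_def bseq_def power2_eq_square)
  next
    case False
    then obtain p where p: "n = p + 4"
      using le_add_diff_inverse2 by (metis not_less)
    have "card (odd_block_swaps n)
        = card ((\<lambda>a. (a, 1::nat)) ` {..p + 2}) + card ((\<lambda>(a, c). (a, c + 2)) ` odd_block_swaps p)"
      unfolding p odd_block_swaps_add_4
      using finite_odd_block_swaps[of p] by (intro card_Un_disjoint) (auto simp: odd_block_swaps_def)
    also have "\<dots> = (p + 3) + card (odd_block_swaps p)"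
      by (simp only: card_image_add_snd) (simp add: card_image inj_on_def)
    also have "\<dots> = bseq n"
      using less[of p] p by (simp add: bseq_add_4)
    finally show ?thesis .
  qed
qed

text \<open>Here s is m - k rounded up to an even number, so that the odd c > m - k are exactly the c' + s
  with c' odd.\<close>
lemma avoiding_odd_block_swaps_eq_image:
  assumes s: "even s" "m - k \<le> s" "s \<le> m - k + 1"
  shows "avoiding_odd_block_swaps m k = (\<lambda>(a, c). (a, c + s)) ` odd_block_swaps (m - 2 * s)"
proof
  show "avoiding_odd_block_swaps m k \<subseteq> (\<lambda>(a, c). (a, c + s)) ` odd_block_swaps (m - 2 * s)"
  proof clarify
    fix a c assume "(a, c) \<in> avoiding_odd_block_swaps m k"
    then have ac: "odd c" "a + 2 * c \<le> m" "m < k + c"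
      by (auto simp: avoiding_odd_block_swaps_def odd_block_swaps_def)
    then have "s \<le> c"
      using s odd_pos[of c] by linarith
    moreover have "s \<noteq> c"
      using ac(1) s(1) by auto
    ultimately have "s < c"
      by simp
    then have "(a, c - s) \<in> odd_block_swaps (m - 2 * s)" "(a, c) = (a, c - s + s)"
      using ac s by (auto simp: odd_block_swaps_def)
    then show "(a, c) \<in> (\<lambda>(a, c). (a, c + s)) ` odd_block_swaps (m - 2 * s)"
      by (metis (no_types, lifting) case_prod_conv image_eqI)
  qed
  show "(\<lambda>(a, c). (a, c + s)) ` odd_block_swaps (m - 2 * s) \<subseteq> avoiding_odd_block_swaps m k"
  proof clarify
    fix a c assume "(a, c) \<in> odd_block_swaps (m - 2 * s)"
    then have "odd c" "a + 2 * c \<le> m - 2 * s" "0 < c"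
      by (auto simp: odd_block_swaps_def intro: odd_pos)
    then show "(a, c + s) \<in> avoiding_odd_block_swaps m k"
      using s by (auto simp: avoiding_odd_block_swaps_def odd_block_swaps_def)
  qed
qed

lemma card_avoiding_odd_block_swaps:
  assumes "even s" "m - k \<le> s" "s \<le> m - k + 1"
  shows "card (avoiding_odd_block_swaps m k) = bseq (m - 2 * s)"
  by (simp add: avoiding_odd_block_swaps_eq_image[OF assms] card_image_add_snd card_odd_block_swaps)

theorem mainTheorem20:
  fixes k m :: nat
  assumes "k \<ge> 1" and "m \<ge> 1"
  shows "card (odd_grass_inv_avoiding m k) =
    (if m \<le> k then bseq m
     else if m < 2 * k \<and> even (m - k) then bseq (2 * k - m)
     else if m < 2 * k \<and> odd (m - k) then bseq (2 * k - m - 2)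
     else 0)"
proof -
  \<comment> \<open>The count is also correct for k = 0 or m = 0.\<close>
  define s where "s = (if even (m - k) then m - k else m - k + 1)"
  have s: "even s" "m - k \<le> s" "s \<le> m - k + 1"
    by (auto simp: s_def)
  have "inj_on (\<lambda>(a, c). block_swap a c) (avoiding_odd_block_swaps m k)"
    by (rule inj_on_subset[OF inj_on_block_swap])
      (auto simp: avoiding_odd_block_swaps_def odd_block_swaps_def intro: odd_pos)
  then have "card (odd_grass_inv_avoiding m k) = bseq (m - 2 * s)"
    by (simp add: odd_grass_inv_avoiding_eq_image card_image card_avoiding_odd_block_swaps[OF s])
  also have "m - 2 * s = (if m \<le> k then m
       else if m < 2 * k \<and> even (m - k) then 2 * k - m
       else if m < 2 * k \<and> odd (m - k) then 2 * k - m - 2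
       else 0)"
    by (auto simp: s_def)
  finally show ?thesis
    by (simp add: bseq_def)
qed

end
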